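(* Assume (H1) and let $\alpha\in(0,2)$. There is a constant $C_2>0$ such that for every $\theta>1/d$ there exists a $[1,\infty]$-valued random variable $m_0$, finite $\mathbb P$-a.s., such that for $\mathbb P$-a.e. $\omega$, all integers $m>m_0(\omega)$, all $n\in\mathbb N\cap[\theta\log_2(m\log 2),\,m]$ and all $f,g:B_{2^m}\to\mathbb R$, $$\sum_{x\in B_{2^m}}f(x)\Big(g(x)-\oint_{B_{2^m}}g\,d\mu\Big)\le\sum_{z\in\mathbb Z^d_{m,n}}\sum_{x\in B_{2^n}(z)}f(x)\Big(g(x)-\oint_{B_{2^n}(z)}g\,d\mu\Big)+C_2\,\mathscr E^\omega_{B_{2^m}}(g,g)^{1/2}\sum_{k=n}^{m-1}2^{k(d+\alpha)/2}\Big(\sum_{y\in\mathbb Z^d_{m,k}}\Big(\oint_{B_{2^k}(y)}f\,d\mu\Big)^2\Big)^{1/2}.$$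
   Context: Assumption (H1): on a probability space $(\Omega,\mathcal F,\mathbb P)$, $\{w_{x,y}\}$, indexed by unordered pairs of distinct points of $\mathbb Z^d$, are i.i.d. non-negative random variables with $w_{x,y}=w_{y,x}$, $\mathbb E[w_{x,y}]=1$ and $w_{x,y}\le M$ for a constant $M>0$. $\mu$ is counting measure on $\mathbb Z^d$, $B_R(y)=(y+(-R,R]^d)\cap\mathbb Z^d$, $B_R=B_R(0)$, and $\oint_U h\,d\mu=\mu(U)^{-1}\sum_{x\in U}h(x)$. For finite $U$, $\mathscr E^\omega_U(g,g)=\frac12\sum_{x,y\in U,\,x\neq y}(g(x)-g(y))^2\frac{w_{x,y}(\omega)}{|x-y|^{d+\alpha}}$. For integers $n<m$, $\mathbb Z^d_{m,n}=\{z\in B_{2^m}:\ z_i=k_i2^n$ with $k_i$ an odd integer for each $1\le i\le d\}$, and $\mathbb Z^d_{m,m}=\{0\}$ (so $B_{2^m}$ is the disjoint union of $B_{2^n}(z)$, $z\in\mathbb Z^d_{m,n}$). *)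

theory Defs
  imports "HOL-Probability.Probability"
begin

text \<open>Points of Z^d are vectors of type int^'d, d = CARD('d).\<close>

definition box :: "int \<Rightarrow> int^'d \<Rightarrow> (int^'d) set" where
  "box R y = {z. \<forall>i. y$i - R < z$i \<and> z$i \<le> y$i + R}"

definition avg :: "(int^'d) set \<Rightarrow> (int^'d \<Rightarrow> real) \<Rightarrow> real" where
  "avg U h = (\<Sum>x\<in>U. h x) / real (card U)"

definition lnorm :: "int^'d \<Rightarrow> real" where
  "lnorm z = sqrt (\<Sum>i\<in>UNIV. (real_of_int (z$i))\<^sup>2)"

definition edges :: "(int^'d) set set" where
  "edges = {e. \<exists>x y. x \<noteq> y \<and> e = {x, y}}"

definition energy ::
  "((int^'d) set \<Rightarrow> 'w \<Rightarrow> real) \<Rightarrow> 'w \<Rightarrow> real \<Rightarrow> (int^'d) set \<Rightarrow> (int^'d \<Rightarrow> real) \<Rightarrow> real" where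
  "energy W \<omega> \<alpha> U g = (1/2) * (\<Sum>x\<in>U. \<Sum>y\<in>U - {x}.
      (g x - g y)\<^sup>2 * W {x, y} \<omega> / (lnorm (x - y)) powr (real CARD('d) + \<alpha>))"

definition centres :: "nat \<Rightarrow> nat \<Rightarrow> (int^'d) set" where
  "centres m n = (if n < m then
      {z \<in> box (2^m) 0. \<forall>i. \<exists>k::int. odd k \<and> z$i = k * 2^n}
    else {0})"

end

(*
  Let a_k(x) be the average of g over the level-k dyadic block containing x. The difference
  between the two sides without the energy term telescopes into
  sum_{k=n}^{m-1} sum_x f(x) (a_k(x) - a_{k+1}(x)). As a_k - a_{k+1} is constant on level-k
  blocks, Cauchy-Schwarz bounds the k-th term by the l^2-norm of the level-k block averages of f
  times that of a_k - a_{k+1}, and the latter is at most the variance of g on the level-(k+1)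
  blocks. On a block in which every two points have at least delta |P| common neighbours, joined
  to both by edges of weight at least c, this variance is bounded by the Dirichlet energy of the
  block (a Poincare inequality), at the price of a factor diam^(d+alpha) ~ 2^(k(d+alpha)).

  By Hoeffding's inequality a block of N points violates this connectivity, with
  c = 1/2 and delta = p^2/4 where p = P(w >= 1/2) > 0, with probability at most
  N^2 exp(-p^4 N/4). Levels j > theta log_2(m log 2) have N >= (m log 2)^(d theta), and
  d theta > 1 makes the failure probabilities summable in m, so Borel-Cantelli gives m_0.
*)
theory Submission
  imports Defs
begin

section \<open>Boxes and their dyadic decomposition\<close>

lemma mem_box_iff: "x \<in> box R y \<longleftrightarrow> (\<forall>i. y$i - R < x$i \<and> x$i \<le> y$i + R)"
  by (simp add: box_def)

lemma centre_mem_box: "0 < R \<Longrightarrow> y \<in> box R y"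
  by (simp add: mem_box_iff)

lemma box_eq_image_PiE: "box R (y::int^'d) = vec_lambda ` (PiE UNIV (\<lambda>i. {y$i - R<..y$i + R}))"
proof (rule set_eqI)
  fix x :: "int^'d"
  have "x \<in> box R y \<longleftrightarrow> vec_nth x \<in> PiE UNIV (\<lambda>i. {y$i - R<..y$i + R})"
    by (auto simp: mem_box_iff)
  also have "\<dots> \<longleftrightarrow> x \<in> vec_lambda ` (PiE UNIV (\<lambda>i. {y$i - R<..y$i + R}))"
    by (metis (no_types, lifting) image_iff vec_lambda_inverse vec_nth_inverse UNIV_I)
  finally show "x \<in> box R y \<longleftrightarrow> x \<in> vec_lambda ` (PiE UNIV (\<lambda>i. {y$i - R<..y$i + R}))" .
qed

lemma finite_box [simp]: "finite (box R (y::int^'d))"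
  unfolding box_eq_image_PiE by (intro finite_imageI finite_PiE) auto

lemma card_box: "card (box R (y::int^'d)) = nat (2*R) ^ CARD('d)"
proof -
  have "inj_on (vec_lambda :: ('d \<Rightarrow> int) \<Rightarrow> int^'d) (PiE UNIV (\<lambda>i. {y$i - R<..y$i + R}))"
    by (intro inj_onI) (simp add: vec_lambda_inject)
  then have "card (box R y) = card (PiE (UNIV::'d set) (\<lambda>i. {y$i - R<..y$i + R}))"
    unfolding box_eq_image_PiE by (rule card_image)
  then show ?thesis by (simp add: card_PiE)
qed

lemma card_dyadic_box: "card (box (2^j) (y::int^'d)) = 2 ^ ((j+1) * CARD('d))"
  by (simp add: card_box nat_mult_distrib nat_power_eq power_mult power_add)

lemma interval_odd_multiple_iff:
  fixes A t x :: int
  assumes A: "0 < A"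
  shows "A*(2*t+1) - A < x \<and> x \<le> A*(2*t+1) + A \<longleftrightarrow> (x - 1) div (2*A) = t"
proof
  assume "A*(2*t+1) - A < x \<and> x \<le> A*(2*t+1) + A"
  then have "x - 1 = 2*A*t + (x - 1 - 2*A*t)" "0 \<le> x - 1 - 2*A*t" "x - 1 - 2*A*t < 2*A"
    by (auto simp: algebra_simps)
  then show "(x - 1) div (2*A) = t" by (metis int_div_pos_eq)
next
  assume q: "(x - 1) div (2*A) = t"
  have "x - 1 = 2*A*t + (x - 1) mod (2*A)" using div_mult_mod_eq[of "x - 1" "2*A"] q
    by (simp add: algebra_simps)
  moreover have "0 \<le> (x - 1) mod (2*A)" "(x - 1) mod (2*A) < 2*A" using A by simp_all
  ultimately show "A*(2*t+1) - A < x \<and> x \<le> A*(2*t+1) + A" by (auto simp: algebra_simps)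
qed

lemma symmetric_interval_iff_div:
  fixes A Q x :: int
  assumes A: "0 < A"
  shows "-(2*A*Q) < x \<and> x \<le> 2*A*Q \<longleftrightarrow> -Q \<le> (x - 1) div (2*A) \<and> (x - 1) div (2*A) < Q"
proof -
  define q where "q = (x - 1) div (2*A)"
  have x: "2*A*q < x" "x \<le> 2*A*(q + 1)"
    using interval_odd_multiple_iff[OF A, of q x] by (auto simp: q_def algebra_simps)
  have "-(2*A*Q) < x \<longleftrightarrow> -Q \<le> q"
  proof
    assume "-(2*A*Q) < x"
    then have "2*A*(-Q) < 2*A*(q + 1)" using x by simp
    then show "-Q \<le> q" using mult_less_cancel_left_pos[of "2*A" "-Q" "q + 1"] A by linarith
  next
    assume "-Q \<le> q"
    then have "2*A*(-Q) \<le> 2*A*q" using A by (intro mult_left_mono) auto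
    then show "-(2*A*Q) < x" using x by simp
  qed
  moreover have "x \<le> 2*A*Q \<longleftrightarrow> q < Q"
  proof
    assume "x \<le> 2*A*Q"
    then have "2*A*q < 2*A*Q" using x by simp
    then show "q < Q" using mult_less_cancel_left_pos[of "2*A" q Q] A by linarith
  next
    assume "q < Q"
    then have "2*A*(q + 1) \<le> 2*A*Q" using A by (intro mult_left_mono) auto
    then show "x \<le> 2*A*Q" using x by simp
  qed
  ultimately show ?thesis by (simp add: q_def)
qed

text \<open>The level-j block of x is determined by the indices \<open>(x$i - 1) div 2^(j+1)\<close>, which
  number the half-open intervals \<open>(2^(j+1) t, 2^(j+1) (t+1)]\<close>; its centre \<open>2^j (2t+1)\<close> is the
  point of \<open>centres m j\<close> whose box contains x. At the top level m the block is the whole box.\<close>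

definition dyadic_index :: "nat \<Rightarrow> int^'d \<Rightarrow> int^'d" where
  "dyadic_index j x = (\<chi> i. (x$i - 1) div (2 * 2^j))"

definition dyadic_centre :: "nat \<Rightarrow> int^'d \<Rightarrow> int^'d" where
  "dyadic_centre j x = (\<chi> i. 2^j * (2 * dyadic_index j x $ i + 1))"

definition dyadic_block :: "nat \<Rightarrow> nat \<Rightarrow> int^'d \<Rightarrow> (int^'d) set" where
  "dyadic_block m j x = (if j < m then box (2^j) (dyadic_centre j x) else box (2^m) 0)"

lemma mem_box_dyadic_centre_iff:
  "u \<in> box (2^j) (dyadic_centre j x) \<longleftrightarrow> dyadic_index j u = dyadic_index j x"
  using interval_odd_multiple_iff[of "2^j" "dyadic_index j x $ i" "u$i" for i]
  by (simp add: mem_box_iff dyadic_centre_def vec_eq_iff dyadic_index_def)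

lemma mem_box_dyadic_centre: "x \<in> box (2^j) (dyadic_centre j x)"
  by (simp add: mem_box_dyadic_centre_iff)

lemma dyadic_index_Suc: "dyadic_index (Suc j) x $ i = dyadic_index j x $ i div 2"
  unfolding dyadic_index_def vec_lambda_beta power_Suc
  by (metis zdiv_zmult2_eq mult.commute zero_le_numeral)

lemma centres_iff:
  "j < m \<Longrightarrow> z \<in> centres m j \<longleftrightarrow> z \<in> box (2^m) 0 \<and> (\<forall>i. \<exists>k::int. odd k \<and> z$i = k * 2^j)"
  by (simp add: centres_def)

lemma centres_subset_box: "centres m j \<subseteq> box (2^m) (0::int^'d)"
  by (auto simp: centres_def centre_mem_box)

lemma finite_centres [simp]: "finite (centres m j :: (int^'d) set)"
  using centres_subset_box finite_box by (rule finite_subset)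

lemma mem_top_box_iff_dyadic_index:
  assumes "j < m"
  shows "x \<in> box (2^m) 0 \<longleftrightarrow>
    (\<forall>i. -(2^(m-j-1)) \<le> dyadic_index j x $ i \<and> dyadic_index j x $ i < 2^(m-j-1))"
proof -
  have "2 * 2^j * 2^(m-j-1) = (2::int)^m"
    using assms by (simp flip: power_add power_Suc)
  then show ?thesis
    using symmetric_interval_iff_div[of "2^j" "2^(m-j-1)" "x$i" for i]
    by (simp add: mem_box_iff dyadic_index_def)
qed

lemma dyadic_centre_eq_self:
  assumes "j < m" and "z \<in> centres m j"
  shows "dyadic_centre j z = z"
proof -
  have "z$i = 2^j * (2 * dyadic_index j z $ i + 1)" for i
  proof -
    obtain k :: int where "odd k" "z$i = k * 2^j"
      using assms by (auto simp: centres_iff)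
    then obtain t where "z$i = 2^j * (2*t + 1)" by (auto elim!: oddE)
    moreover from this have "dyadic_index j z $ i = t"
      using interval_odd_multiple_iff[of "2^j" t "z$i"] by (simp add: dyadic_index_def)
    ultimately show ?thesis by simp
  qed
  then show ?thesis by (simp add: dyadic_centre_def vec_eq_iff)
qed

lemma dyadic_centre_mem_centres:
  assumes j: "j < m" and x: "x \<in> box (2^m) (0::int^'d)"
  shows "dyadic_centre j x \<in> centres m j"
proof -
  have "dyadic_index j (dyadic_centre j x) = dyadic_index j x"
    using mem_box_dyadic_centre_iff centre_mem_box by (metis zero_less_power zero_less_numeral)
  then have "dyadic_centre j x \<in> box (2^m) 0"
    using x by (simp add: mem_top_box_iff_dyadic_index[OF j])
  moreover have "odd (2 * dyadic_index j x $ i + 1)" for i by simp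
  ultimately show ?thesis
    using j by (auto simp: centres_iff dyadic_centre_def mult.commute)
qed

lemma box_centre_subset_top_box:
  assumes "j \<le> m" and z: "z \<in> centres m j"
  shows "box (2^j) z \<subseteq> box (2^m) (0::int^'d)"
proof (cases "j < m")
  case True
  have "dyadic_centre j z = z" and zU: "z \<in> box (2^m) 0"
    using dyadic_centre_eq_self[OF True z] z True by (auto simp: centres_iff)
  then show ?thesis
    using mem_box_dyadic_centre_iff[of _ j z] zU
    by (auto simp: mem_top_box_iff_dyadic_index[OF True])
next
  case False
  then show ?thesis using assms by (simp add: centres_def)
qed

lemma dyadic_centre_unique:
  assumes "j < m" and "z \<in> centres m j" and "x \<in> box (2^j) z"
  shows "dyadic_centre j x = z"
proof -
  have "dyadic_index j x = dyadic_index j z"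
    using assms dyadic_centre_eq_self mem_box_dyadic_centre_iff by metis
  then show ?thesis using dyadic_centre_eq_self[OF assms(1,2)] by (simp add: dyadic_centre_def)
qed

lemma dyadic_block_subset:
  assumes "x \<in> box (2^m) (0::int^'d)" and "j \<le> m"
  shows "dyadic_block m j x \<subseteq> box (2^m) 0"
  using assms box_centre_subset_top_box[of j m] dyadic_centre_mem_centres[of j m x]
  by (auto simp: dyadic_block_def)

lemma dyadic_block_parent:
  assumes k: "k < m" and z: "z \<in> centres m k" and x: "x \<in> box (2^k) (z::int^'d)"
  shows "dyadic_block m (Suc k) x = dyadic_block m (Suc k) z"
proof -
  have "dyadic_index k x = dyadic_index k z"
    using x dyadic_centre_eq_self[OF k z] mem_box_dyadic_centre_iff by metis
  then have "dyadic_index (Suc k) x = dyadic_index (Suc k) z"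
    by (simp add: vec_eq_iff dyadic_index_Suc)
  then show ?thesis by (simp add: dyadic_block_def dyadic_centre_def)
qed

lemma sum_centres_eq_sum_dyadic_blocks:
  fixes F :: "(int^'d) set \<Rightarrow> int^'d \<Rightarrow> 'b::comm_monoid_add"
  assumes "j \<le> m"
  shows "(\<Sum>z\<in>centres m j. \<Sum>x\<in>box (2^j) z. F (box (2^j) z) x)
       = (\<Sum>x\<in>box (2^m) (0::int^'d). F (dyadic_block m j x) x)"
proof (cases "j < m")
  case True
  have U: "box (2^m) 0 = (\<Union>z\<in>centres m j. box (2^j) z)"
    using box_centre_subset_top_box[OF assms] dyadic_centre_mem_centres[OF True] mem_box_dyadic_centre
    by blast
  have "(\<Sum>x\<in>box (2^m) 0. F (dyadic_block m j x) x)
      = (\<Sum>z\<in>centres m j. \<Sum>x\<in>box (2^j) z. F (dyadic_block m j x) x)"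
    unfolding U using dyadic_centre_unique[OF True]
    by (intro sum.UNION_disjoint finite_centres) (simp, blast)
  also have "\<dots> = (\<Sum>z\<in>centres m j. \<Sum>x\<in>box (2^j) z. F (box (2^j) z) x)"
    using dyadic_centre_unique[OF True] True by (intro sum.cong refl) (auto simp: dyadic_block_def)
  finally show ?thesis by simp
next
  case False
  then show ?thesis using assms by (simp add: centres_def dyadic_block_def centre_mem_box)
qed

section \<open>A Poincare inequality on well-connected boxes\<close>

lemma sum_eq_card_mult_avg: "finite S \<Longrightarrow> (\<Sum>x\<in>S. g x) = real (card S) * avg S g"
  by (cases "card S = 0") (auto simp: avg_def)

lemma card_mult_sq_avg_diff_le:
  assumes "finite S"
  shows "real (card S) * (avg S g - a)\<^sup>2 \<le> (\<Sum>x\<in>S. (g x - a)\<^sup>2)"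
proof (cases "S = {}")
  case False
  then have N: "0 < real (card S)" using assms by (simp add: card_gt_0_iff)
  have "(\<Sum>x\<in>S. 1 * (g x - a)) = real (card S) * (avg S g - a)"
    using assms N by (simp add: sum_subtractf avg_def algebra_simps)
  moreover have "(\<Sum>x\<in>S. 1 * (g x - a))\<^sup>2 \<le> (\<Sum>x\<in>S. 1\<^sup>2) * (\<Sum>x\<in>S. (g x - a)\<^sup>2)"
    by (rule Cauchy_Schwarz_ineq_sum)
  moreover have "(real (card S) * (avg S g - a))\<^sup>2 = real (card S) * (real (card S) * (avg S g - a)\<^sup>2)"
    by (simp add: power2_eq_square)
  ultimately have "real (card S) * (real (card S) * (avg S g - a)\<^sup>2)
      \<le> real (card S) * (\<Sum>x\<in>S. (g x - a)\<^sup>2)"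
    by simp
  then show ?thesis using N by simp
qed simp

lemma card_mult_sum_sq_dev_le:
  assumes "finite S"
  shows "real (card S) * (\<Sum>x\<in>S. (g x - avg S g)\<^sup>2) \<le> (\<Sum>x\<in>S. \<Sum>u\<in>S. (g x - g u)\<^sup>2)"
proof -
  have "real (card S) * (g x - avg S g)\<^sup>2 \<le> (\<Sum>u\<in>S. (g x - g u)\<^sup>2)" for x
    using card_mult_sq_avg_diff_le[OF assms, of g "g x"] by (simp add: power2_commute)
  then show ?thesis by (simp add: sum_distrib_left sum_mono)
qed

definition well_connected :: "('a set \<Rightarrow> real) \<Rightarrow> real \<Rightarrow> real \<Rightarrow> 'a set \<Rightarrow> bool" where
  "well_connected w c \<delta> P \<longleftrightarrow> (\<forall>x\<in>P. \<forall>u\<in>P-{x}.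
     \<delta> * real (card P) \<le> real (card {z \<in> P - {x,u}. c \<le> w {x,z} \<and> c \<le> w {z,u}}))"

lemma sq_diff_le_via_common_neighbours:
  fixes w :: "'a set \<Rightarrow> real"
  assumes fin: "finite P" and c: "0 < c" and \<delta>: "0 < \<delta>"
    and w: "\<forall>x\<in>P. \<forall>z\<in>P. x \<noteq> z \<longrightarrow> 0 \<le> w {x,z}"
    and conn: "well_connected w c \<delta> P" and x: "x \<in> P" and u: "u \<in> P" and xu: "x \<noteq> u"
  shows "\<delta> * real (card P) * (g x - g u)\<^sup>2
    \<le> 2/c * ((\<Sum>z\<in>P-{x}. w {x,z} * (g x - g z)\<^sup>2) + (\<Sum>z\<in>P-{u}. w {u,z} * (g u - g z)\<^sup>2))"
proof -
  define S where "S = {z \<in> P - {x,u}. c \<le> w {x,z} \<and> c \<le> w {z,u}}"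
  have "\<delta> * real (card P) * (g x - g u)\<^sup>2 \<le> real (card S) * (g x - g u)\<^sup>2"
    using conn x u xu by (intro mult_right_mono) (auto simp: well_connected_def S_def)
  also have "\<dots> = (\<Sum>z\<in>S. (g x - g u)\<^sup>2)" by simp
  also have "\<dots> \<le> (\<Sum>z\<in>S. 2/c * (w {x,z} * (g x - g z)\<^sup>2) + 2/c * (w {u,z} * (g u - g z)\<^sup>2))"
  proof (rule sum_mono)
    fix z assume "z \<in> S"
    then have "c * (g x - g z)\<^sup>2 \<le> w {x,z} * (g x - g z)\<^sup>2"
      and "c * (g u - g z)\<^sup>2 \<le> w {u,z} * (g u - g z)\<^sup>2"
      by (auto simp: S_def insert_commute intro!: mult_right_mono)
    moreover have "(g x - g u)\<^sup>2 \<le> 2 * (g x - g z)\<^sup>2 + 2 * (g u - g z)\<^sup>2"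
      using sum_squares_ge_zero[of "g x + g u - 2 * g z" 0] by (simp add: power2_eq_square algebra_simps)
    then have "c * (g x - g u)\<^sup>2 \<le> 2 * (c * (g x - g z)\<^sup>2) + 2 * (c * (g u - g z)\<^sup>2)"
      using mult_left_mono[of _ _ c] c by (fastforce simp: algebra_simps)
    ultimately show "(g x - g u)\<^sup>2 \<le> 2/c * (w {x,z} * (g x - g z)\<^sup>2) + 2/c * (w {u,z} * (g u - g z)\<^sup>2)"
      using c by (simp add: field_simps)
  qed
  also have "\<dots> = 2/c * ((\<Sum>z\<in>S. w {x,z} * (g x - g z)\<^sup>2) + (\<Sum>z\<in>S. w {u,z} * (g u - g z)\<^sup>2))"
    by (simp only: sum.distrib sum_distrib_left distrib_left)
  also have "\<dots> \<le> 2/c * ((\<Sum>z\<in>P-{x}. w {x,z} * (g x - g z)\<^sup>2) + (\<Sum>z\<in>P-{u}. w {u,z} * (g u - g z)\<^sup>2))"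
    using fin w x u c by (intro mult_left_mono add_mono sum_mono2) (auto simp: S_def)
  finally show ?thesis .
qed

lemma poincare_well_connected:
  fixes w :: "'a set \<Rightarrow> real"
  assumes fin: "finite P" and c: "0 < c" and \<delta>: "0 < \<delta>"
    and w: "\<forall>x\<in>P. \<forall>z\<in>P. x \<noteq> z \<longrightarrow> 0 \<le> w {x,z}" and conn: "well_connected w c \<delta> P"
  shows "(\<Sum>x\<in>P. \<Sum>u\<in>P. (g x - g u)\<^sup>2) \<le> 4/(c*\<delta>) * (\<Sum>x\<in>P. \<Sum>z\<in>P-{x}. w {x,z} * (g x - g z)\<^sup>2)"
proof -
  define h where "h x = (\<Sum>z\<in>P-{x}. w {x,z} * (g x - g z)\<^sup>2)" for x
  define N where "N = real (card P)"
  have *: "N * (\<Sum>x\<in>P. \<Sum>u\<in>P. (g x - g u)\<^sup>2) \<le> N * (4/(c*\<delta>) * (\<Sum>x\<in>P. h x))"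
  proof -
    have "0 \<le> h x" if "x \<in> P" for x
      using w that by (auto simp: h_def intro!: sum_nonneg mult_nonneg_nonneg)
    then have "\<delta> * N * (g x - g u)\<^sup>2 \<le> 2/c * (h x + h u)" if "x \<in> P" "u \<in> P" for x u
      using sq_diff_le_via_common_neighbours[OF assms that] that c
      by (cases "x = u") (auto simp: h_def N_def)
    then have "\<delta> * N * (\<Sum>x\<in>P. \<Sum>u\<in>P. (g x - g u)\<^sup>2) \<le> (\<Sum>x\<in>P. \<Sum>u\<in>P. 2/c * (h x + h u))"
      by (simp add: sum_distrib_left sum_mono)
    also have "\<dots> = 2/c * (\<Sum>x\<in>P. \<Sum>u\<in>P. h x + h u)"
      by (simp only: sum_distrib_left)
    also have "(\<Sum>x\<in>P. \<Sum>u\<in>P. h x + h u) = 2 * (N * (\<Sum>x\<in>P. h x))"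
      by (simp add: sum.distrib N_def flip: sum_distrib_left)
    finally show ?thesis using \<delta> c by (simp add: field_simps)
  qed
  show ?thesis
  proof (cases "P = {}")
    case False
    then have "0 < N" using fin by (simp add: N_def card_gt_0_iff)
    then show ?thesis using * unfolding h_def by (simp only: mult_le_cancel_left_pos)
  qed simp
qed

lemma lnorm_diff_pos:
  assumes "x \<noteq> (z::int^'d)"
  shows "0 < lnorm (x - z)"
proof -
  obtain i where "x$i \<noteq> z$i" using assms by (auto simp: vec_eq_iff)
  then have "0 < (\<Sum>i\<in>UNIV. (real_of_int ((x - z)$i))\<^sup>2)"
    by (intro sum_pos2[of UNIV i]) auto
  then show ?thesis unfolding lnorm_def by simp
qed

lemma lnorm_diff_le_box:
  assumes x: "x \<in> box R y" and z: "z \<in> box R (y::int^'d)"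
  shows "lnorm (x - z) \<le> 2 * real_of_int R * sqrt (real CARD('d))"
proof -
  have R: "0 \<le> R" using x by (auto simp: mem_box_iff)
  have "(real_of_int ((x - z)$i))\<^sup>2 \<le> (2 * real_of_int R)\<^sup>2" for i
  proof -
    have "\<bar>x$i - z$i\<bar> \<le> 2*R" using x z by (auto simp: mem_box_iff abs_le_iff) (smt (verit))+
    then have "real_of_int \<bar>x$i - z$i\<bar> \<le> real_of_int (2*R)" by (simp only: of_int_le_iff)
    then have "\<bar>real_of_int ((x - z)$i)\<bar> \<le> \<bar>2 * real_of_int R\<bar>" using R by simp
    then show ?thesis by (simp only: abs_le_square_iff)
  qed
  then have "(\<Sum>i\<in>UNIV. (real_of_int ((x - z)$i))\<^sup>2) \<le> real CARD('d) * (2 * real_of_int R)\<^sup>2"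
    using sum_mono[of UNIV "\<lambda>i. (real_of_int ((x - z)$i))\<^sup>2" "\<lambda>_. (2 * real_of_int R)\<^sup>2"] by simp
  then have "lnorm (x - z) \<le> sqrt (real CARD('d) * (2 * real_of_int R)\<^sup>2)"
    unfolding lnorm_def by (rule real_sqrt_le_mono)
  also have "\<dots> = 2 * real_of_int R * sqrt (real CARD('d))"
    using R by (simp add: real_sqrt_mult)
  finally show ?thesis .
qed

lemma energy_nonneg:
  assumes "\<forall>x\<in>P. \<forall>z\<in>P. x \<noteq> z \<longrightarrow> 0 \<le> W {x,z} \<omega>"
  shows "0 \<le> energy W \<omega> \<alpha> P g"
  unfolding energy_def using assms by (auto intro!: sum_nonneg divide_nonneg_nonneg)

lemma weighted_sum_le_energy:
  fixes P :: "(int^'d) set"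
  assumes "finite P" and "0 \<le> \<alpha>"
    and W: "\<forall>x\<in>P. \<forall>z\<in>P. x \<noteq> z \<longrightarrow> 0 \<le> W {x,z} \<omega> \<and> lnorm (x - z) \<le> D"
  shows "(\<Sum>x\<in>P. \<Sum>z\<in>P-{x}. W {x,z} \<omega> * (g x - g z)\<^sup>2)
     \<le> 2 * D powr (real CARD('d) + \<alpha>) * energy W \<omega> \<alpha> P g"
proof -
  let ?s = "real CARD('d) + \<alpha>"
  have "W {x,z} \<omega> * (g x - g z)\<^sup>2 \<le> D powr ?s * ((g x - g z)\<^sup>2 * W {x,z} \<omega> / lnorm (x - z) powr ?s)"
    if "x \<in> P" and "z \<in> P - {x}" for x z
  proof -
    have pos: "0 < lnorm (x - z)" using that by (intro lnorm_diff_pos) auto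
    have L: "0 < lnorm (x - z) powr ?s" using pos by simp
    have "lnorm (x - z) powr ?s \<le> D powr ?s"
      by (intro powr_mono2) (use W that pos \<open>0 \<le> \<alpha>\<close> in auto)
    then have "W {x,z} \<omega> * (g x - g z)\<^sup>2 * lnorm (x - z) powr ?s \<le> W {x,z} \<omega> * (g x - g z)\<^sup>2 * D powr ?s"
      using W that by (intro mult_left_mono) auto
    then show ?thesis using L by (simp add: field_simps)
  qed
  then have "(\<Sum>x\<in>P. \<Sum>z\<in>P-{x}. W {x,z} \<omega> * (g x - g z)\<^sup>2)
      \<le> (\<Sum>x\<in>P. \<Sum>z\<in>P-{x}. D powr ?s * ((g x - g z)\<^sup>2 * W {x,z} \<omega> / lnorm (x - z) powr ?s))"
    by (intro sum_mono) auto
  also have "\<dots> = 2 * D powr ?s * energy W \<omega> \<alpha> P g"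
    by (simp add: energy_def sum_distrib_left)
  finally show ?thesis .
qed

lemma sum_sq_dev_le_energy:
  fixes y :: "int^'d"
  assumes c: "0 < c" and \<delta>: "0 < \<delta>" and \<alpha>: "0 \<le> \<alpha>"
    and W: "\<forall>x\<in>box R y. \<forall>z\<in>box R y. x \<noteq> z \<longrightarrow> 0 \<le> W {x,z} \<omega>"
    and conn: "well_connected (\<lambda>e. W e \<omega>) c \<delta> (box R y)"
  shows "(\<Sum>x\<in>box R y. (g x - avg (box R y) g)\<^sup>2)
    \<le> 8 * (2 * real_of_int R * sqrt (real CARD('d))) powr (real CARD('d) + \<alpha>)
         / (c * \<delta> * real (card (box R y))) * energy W \<omega> \<alpha> (box R y) g"
proof (cases "box R y = {}")
  case False
  let ?P = "box R y" and ?D = "2 * real_of_int R * sqrt (real CARD('d))"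
  have N: "0 < real (card ?P)" using False by (simp add: card_gt_0_iff)
  have "real (card ?P) * (\<Sum>x\<in>?P. (g x - avg ?P g)\<^sup>2) \<le> (\<Sum>x\<in>?P. \<Sum>u\<in>?P. (g x - g u)\<^sup>2)"
    by (simp add: card_mult_sum_sq_dev_le)
  also have "\<dots> \<le> 4/(c*\<delta>) * (\<Sum>x\<in>?P. \<Sum>z\<in>?P-{x}. W {x,z} \<omega> * (g x - g z)\<^sup>2)"
    using poincare_well_connected[OF finite_box c \<delta> _ conn] W by simp
  also have "\<dots> \<le> 4/(c*\<delta>) * (2 * ?D powr (real CARD('d) + \<alpha>) * energy W \<omega> \<alpha> ?P g)"
  proof -
    have "(\<Sum>x\<in>?P. \<Sum>z\<in>?P-{x}. W {x,z} \<omega> * (g x - g z)\<^sup>2)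
        \<le> 2 * ?D powr (real CARD('d) + \<alpha>) * energy W \<omega> \<alpha> ?P g"
      by (rule weighted_sum_le_energy) (use W lnorm_diff_le_box \<alpha> in auto)
    then show ?thesis using c \<delta> by (intro mult_left_mono) auto
  qed
  finally show ?thesis using N c \<delta> by (simp add: field_simps)
qed simp

lemma sum_energy_centres_le:
  assumes j: "j \<le> m"
    and W: "\<forall>x\<in>box (2^m) 0. \<forall>z\<in>box (2^m) (0::int^'d). x \<noteq> z \<longrightarrow> 0 \<le> W {x,z} \<omega>"
  shows "(\<Sum>y\<in>centres m j. energy W \<omega> \<alpha> (box (2^j) y) g) \<le> energy W \<omega> \<alpha> (box (2^m) (0::int^'d)) g"
proof -
  let ?t = "\<lambda>x z. (g x - g z)\<^sup>2 * W {x,z} \<omega> / (lnorm (x - z)) powr (real CARD('d) + \<alpha>)"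
  have "(\<Sum>y\<in>centres m j. energy W \<omega> \<alpha> (box (2^j) y) g)
     = 1/2 * (\<Sum>y\<in>centres m j. \<Sum>x\<in>box (2^j) y. \<Sum>z\<in>box (2^j) y - {x}. ?t x z)"
    by (simp add: energy_def sum_distrib_left)
  also have "\<dots> = 1/2 * (\<Sum>x\<in>box (2^m) 0. \<Sum>z\<in>dyadic_block m j x - {x}. ?t x z)"
    using sum_centres_eq_sum_dyadic_blocks[OF j, where F="\<lambda>B x. \<Sum>z\<in>B - {x}. ?t x z"] by simp
  also have "\<dots> \<le> 1/2 * (\<Sum>x\<in>box (2^m) 0. \<Sum>z\<in>box (2^m) 0 - {x}. ?t x z)"
  proof (intro mult_left_mono sum_mono)
    fix x assume x: "x \<in> box (2^m) (0::int^'d)"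
    show "(\<Sum>z\<in>dyadic_block m j x - {x}. ?t x z) \<le> (\<Sum>z\<in>box (2^m) 0 - {x}. ?t x z)"
      using dyadic_block_subset[OF x j] W x by (intro sum_mono2) (auto intro!: divide_nonneg_nonneg)
  qed simp
  finally show ?thesis by (simp add: energy_def)
qed

section \<open>The multiscale bound\<close>

lemma avg_parent_block_const:
  assumes "k < m" and "z \<in> centres m k" and "x \<in> box (2^k) (z::int^'d)"
  shows "avg (dyadic_block m (Suc k) x) g = avg (dyadic_block m (Suc k) z) g"
  using dyadic_block_parent[OF assms] by simp

lemma sum_level_difference_eq:
  fixes f g :: "int^'d \<Rightarrow> real"
  assumes k: "k < m"
  shows "(\<Sum>x\<in>box (2^m) 0. f x * (avg (dyadic_block m k x) g - avg (dyadic_block m (Suc k) x) g))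
    = (\<Sum>z\<in>centres m k. (\<Sum>x\<in>box (2^k) z. f x)
         * (avg (box (2^k) z) g - avg (dyadic_block m (Suc k) z) g))"
proof -
  let ?a = "\<lambda>x. avg (dyadic_block m (Suc k) x) g"
  have "(\<Sum>x\<in>box (2^m) 0. f x * (avg (dyadic_block m k x) g - ?a x))
      = (\<Sum>z\<in>centres m k. \<Sum>x\<in>box (2^k) z. f x * (avg (box (2^k) z) g - ?a x))"
    using sum_centres_eq_sum_dyadic_blocks[of k m "\<lambda>B x. f x * (avg B g - ?a x)"] k by simp
  also have "\<dots> = (\<Sum>z\<in>centres m k. \<Sum>x\<in>box (2^k) z. f x * (avg (box (2^k) z) g - ?a z))"
    by (intro sum.cong refl) (metis avg_parent_block_const[OF k])
  also have "\<dots> = (\<Sum>z\<in>centres m k. (\<Sum>x\<in>box (2^k) z. f x) * (avg (box (2^k) z) g - ?a z))"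
    by (simp add: sum_distrib_right)
  finally show ?thesis .
qed

lemma sum_sq_level_difference_le_energy:
  fixes g :: "int^'d \<Rightarrow> real"
  assumes W: "\<forall>x\<in>box (2^m) 0. \<forall>z\<in>box (2^m) (0::int^'d). x \<noteq> z \<longrightarrow> 0 \<le> W {x,z} \<omega>"
    and c: "0 < c" and \<delta>: "0 < \<delta>" and \<alpha>: "0 \<le> \<alpha>" and k: "k < m"
    and conn: "\<forall>y\<in>centres m (Suc k). well_connected (\<lambda>e. W e \<omega>) c \<delta> (box (2^Suc k) (y::int^'d))"
  shows "(\<Sum>z\<in>centres m k. real (card (box (2^k) z))
            * (avg (box (2^k) z) g - avg (dyadic_block m (Suc k) z) g)\<^sup>2)
    \<le> 8 * (4 * 2^k * sqrt (real CARD('d))) powr (real CARD('d) + \<alpha>)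
         / (c * \<delta> * 2^((k+2) * CARD('d))) * energy W \<omega> \<alpha> (box (2^m) 0) g"
proof -
  let ?a = "\<lambda>x. avg (dyadic_block m (Suc k) x) g"
  define K where "K = 8 * (4 * 2^k * sqrt (real CARD('d))) powr (real CARD('d) + \<alpha>)
         / (c * \<delta> * 2^((k+2) * CARD('d)))"
  have "(\<Sum>z\<in>centres m k. real (card (box (2^k) z)) * (avg (box (2^k) z) g - ?a z)\<^sup>2)
      \<le> (\<Sum>z\<in>centres m k. \<Sum>x\<in>box (2^k) z. (g x - ?a z)\<^sup>2)"
    by (intro sum_mono card_mult_sq_avg_diff_le finite_box)
  also have "\<dots> = (\<Sum>z\<in>centres m k. \<Sum>x\<in>box (2^k) z. (g x - ?a x)\<^sup>2)"
    by (intro sum.cong refl) (metis avg_parent_block_const[OF k])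
  also have "\<dots> = (\<Sum>x\<in>box (2^m) 0. (g x - ?a x)\<^sup>2)"
    using sum_centres_eq_sum_dyadic_blocks[of k m "\<lambda>B x. (g x - ?a x)\<^sup>2"] k by simp
  also have "\<dots> = (\<Sum>y\<in>centres m (Suc k). \<Sum>x\<in>box (2^Suc k) y. (g x - avg (box (2^Suc k) y) g)\<^sup>2)"
    using sum_centres_eq_sum_dyadic_blocks[of "Suc k" m "\<lambda>B x. (g x - avg B g)\<^sup>2"] k by simp
  also have "\<dots> \<le> (\<Sum>y\<in>centres m (Suc k). K * energy W \<omega> \<alpha> (box (2^Suc k) y) g)"
  proof (rule sum_mono)
    fix y :: "int^'d" assume y: "y \<in> centres m (Suc k)"
    let ?P = "box (2^Suc k) y"
    have Wy: "\<forall>x\<in>?P. \<forall>z\<in>?P. x \<noteq> z \<longrightarrow> 0 \<le> W {x,z} \<omega>"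
      using W box_centre_subset_top_box[of "Suc k" m y] y k by (meson Suc_leI subsetD)
    have "2 * real_of_int ((2::int)^Suc k) = 4 * 2^k" by simp
    then show "(\<Sum>x\<in>?P. (g x - avg ?P g)\<^sup>2) \<le> K * energy W \<omega> \<alpha> ?P g"
      using sum_sq_dev_le_energy[where W=W and \<omega>=\<omega>, OF c \<delta> \<alpha> Wy conn[rule_format, OF y], of g]
        card_dyadic_box[of "Suc k" y]
      by (simp add: K_def)
  qed
  also have "\<dots> = K * (\<Sum>y\<in>centres m (Suc k). energy W \<omega> \<alpha> (box (2^Suc k) y) g)"
    by (simp only: sum_distrib_left)
  also have "\<dots> \<le> K * energy W \<omega> \<alpha> (box (2^m) 0) g"
  proof (rule mult_left_mono)
    show "0 \<le> K" unfolding K_def using c \<delta> by simp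
  qed (use sum_energy_centres_le[of "Suc k" m W \<omega> \<alpha> g] W k in simp)
  finally show ?thesis unfolding K_def .
qed

definition level_constant :: "real \<Rightarrow> real \<Rightarrow> nat \<Rightarrow> real \<Rightarrow> real" where
  "level_constant c \<delta> d \<alpha> = sqrt (8 * (4 * sqrt (real d)) powr (real d + \<alpha>) / (c * \<delta> * 2^d))"

lemma sq_sum_level_difference_le:
  fixes f g :: "int^'d \<Rightarrow> real"
  assumes k: "k < m"
  shows "(\<Sum>x\<in>box (2^m) 0. f x * (avg (dyadic_block m k x) g - avg (dyadic_block m (Suc k) x) g))\<^sup>2
    \<le> (2^((k+1) * CARD('d)))\<^sup>2 * (\<Sum>y\<in>centres m k. (avg (box (2^k) y) f)\<^sup>2)
       * (\<Sum>z\<in>centres m k. (avg (box (2^k) z) g - avg (dyadic_block m (Suc k) z) g)\<^sup>2)"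
proof -
  let ?S = "\<lambda>z. \<Sum>x\<in>box (2^k) z. f x" and ?\<Delta> = "\<lambda>z. avg (box (2^k) z) g - avg (dyadic_block m (Suc k) z) g"
  have "(\<Sum>z\<in>centres m k. ?S z * ?\<Delta> z)\<^sup>2 \<le> (\<Sum>z\<in>centres m k. (?S z)\<^sup>2) * (\<Sum>z\<in>centres m k. (?\<Delta> z)\<^sup>2)"
    by (rule Cauchy_Schwarz_ineq_sum)
  also have "(\<Sum>z\<in>centres m k. (?S z)\<^sup>2) = (2^((k+1) * CARD('d)))\<^sup>2 * (\<Sum>y\<in>centres m k. (avg (box (2^k) y) f)\<^sup>2)"
    by (simp add: sum_eq_card_mult_avg[OF finite_box] card_dyadic_box power_mult_distrib sum_distrib_left)
  finally show ?thesis by (simp only: sum_level_difference_eq[OF k])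
qed

lemma level_difference_bound:
  fixes f g :: "int^'d \<Rightarrow> real"
  assumes W: "\<forall>x\<in>box (2^m) 0. \<forall>z\<in>box (2^m) (0::int^'d). x \<noteq> z \<longrightarrow> 0 \<le> W {x,z} \<omega>"
    and c: "0 < c" and \<delta>: "0 < \<delta>" and \<alpha>: "0 \<le> \<alpha>" and k: "k < m"
    and conn: "\<forall>y\<in>centres m (Suc k). well_connected (\<lambda>e. W e \<omega>) c \<delta> (box (2^Suc k) (y::int^'d))"
  shows "(\<Sum>x\<in>box (2^m) 0. f x * (avg (dyadic_block m k x) g - avg (dyadic_block m (Suc k) x) g))
    \<le> level_constant c \<delta> CARD('d) \<alpha> * sqrt (energy W \<omega> \<alpha> (box (2^m) 0) g)
       * (2 powr (real k * (real CARD('d) + \<alpha>) / 2) * sqrt (\<Sum>y\<in>centres m k. (avg (box (2^k) y) f)\<^sup>2))"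
    (is "?T \<le> ?C * sqrt ?E * (?p * sqrt ?F)")
proof -
  define s where "s = real CARD('d) + \<alpha>"
  define B :: real where "B = 2^((k+1) * CARD('d))"
  define K where "K = 8 * (4 * 2^k * sqrt (real CARD('d))) powr s / (c * \<delta> * 2^((k+2) * CARD('d)))"
  define \<Delta> where "\<Delta> z = avg (box (2^k) z) g - avg (dyadic_block m (Suc k) z) g" for z
  define G where "G = (\<Sum>z\<in>centres m k. (\<Delta> z)\<^sup>2)"
  have B: "0 < B" by (simp add: B_def)
  have E: "0 \<le> ?E" using W by (rule energy_nonneg)
  have F: "0 \<le> ?F" by (simp add: sum_nonneg)
  have "?T\<^sup>2 \<le> B\<^sup>2 * ?F * G"
    unfolding B_def G_def \<Delta>_def by (rule sq_sum_level_difference_le[OF k])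
  also have "B\<^sup>2 * ?F * G = B * ?F * (B * G)" by (simp add: power2_eq_square)
  also have "\<dots> \<le> B * ?F * (K * ?E)"
  proof (rule mult_left_mono)
    have "B * G = (\<Sum>z\<in>centres m k. real (card (box (2^k) z)) * (\<Delta> z)\<^sup>2)"
      by (simp add: G_def B_def card_dyadic_box sum_distrib_left)
    also have "\<dots> \<le> K * ?E"
      unfolding \<Delta>_def K_def s_def by (rule sum_sq_level_difference_le_energy[where W=W and \<omega>=\<omega>, OF W c \<delta> \<alpha> k conn])
    finally show "B * G \<le> K * ?E" .
  qed (use B F in simp)
  also have "B * ?F * (K * ?E) = (?C * sqrt ?E * (?p * sqrt ?F))\<^sup>2"
  proof -
    define X where "X = 8 * (4 * sqrt (real CARD('d))) powr s / (c * \<delta> * 2^CARD('d))"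
    have "(4 * 2^k * sqrt (real CARD('d))) powr s = (4 * sqrt (real CARD('d))) powr s * ?p\<^sup>2"
      by (simp add: s_def powr_mult powr_powr flip: powr_realpow powr_mult_base)
    moreover have "(2::real)^((k+2) * CARD('d)) = B * 2^CARD('d)"
      by (simp add: B_def flip: power_add)
    ultimately have "B * K = X * ?p\<^sup>2"
      unfolding K_def X_def using B by simp
    moreover have "?C\<^sup>2 = X"
      using c \<delta> by (simp add: level_constant_def X_def s_def)
    moreover have "(?C * sqrt ?E * (?p * sqrt ?F))\<^sup>2 = ?C\<^sup>2 * ?p\<^sup>2 * ?E * ?F"
      using E F by (simp add: power_mult_distrib)
    ultimately show ?thesis by simp
  qed
  finally have "?T\<^sup>2 \<le> (?C * sqrt ?E * (?p * sqrt ?F))\<^sup>2" .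
  moreover have "0 \<le> ?C" using c \<delta> by (simp add: level_constant_def)
  then have "0 \<le> ?C * sqrt ?E * (?p * sqrt ?F)" using E F by simp
  ultimately show ?thesis by (rule power2_le_imp_le)
qed

lemma multiscale_bound:
  fixes f g :: "int^'d \<Rightarrow> real"
  assumes W: "\<forall>x\<in>box (2^m) 0. \<forall>z\<in>box (2^m) (0::int^'d). x \<noteq> z \<longrightarrow> 0 \<le> W {x,z} \<omega>"
    and c: "0 < c" and \<delta>: "0 < \<delta>" and \<alpha>: "0 \<le> \<alpha>" and nm: "n \<le> m"
    and conn: "\<forall>j. n < j \<and> j \<le> m \<longrightarrow>
      (\<forall>y\<in>centres m j. well_connected (\<lambda>e. W e \<omega>) c \<delta> (box (2^j) (y::int^'d)))"
  shows "(\<Sum>x\<in>box (2^m) 0. f x * (g x - avg (box (2^m) 0) g))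
    \<le> (\<Sum>z\<in>centres m n. \<Sum>x\<in>box (2^n) z. f x * (g x - avg (box (2^n) z) g))
       + level_constant c \<delta> CARD('d) \<alpha> * sqrt (energy W \<omega> \<alpha> (box (2^m) 0) g)
         * (\<Sum>k\<in>{n..<m}. 2 powr (real k * (real CARD('d) + \<alpha>) / 2)
             * sqrt (\<Sum>y\<in>centres m k. (avg (box (2^k) y) f)\<^sup>2))"
proof -
  let ?U = "box (2^m) (0::int^'d)"
  let ?C = "level_constant c \<delta> CARD('d) \<alpha> * sqrt (energy W \<omega> \<alpha> ?U g)"
  define a where "a k x = avg (dyadic_block m k x) g" for k x
  have telescope: "a n x - a m x = (\<Sum>k\<in>{n..<m}. a k x - a (Suc k) x)" for x
    using sum_Suc_diff'[OF nm, of "\<lambda>k. - a k x"] by simp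
  have "(\<Sum>x\<in>?U. f x * (g x - avg ?U g))
      = (\<Sum>x\<in>?U. f x * (g x - a n x)) + (\<Sum>x\<in>?U. f x * (a n x - a m x))"
    by (simp add: a_def dyadic_block_def algebra_simps flip: sum.distrib)
  also have "(\<Sum>x\<in>?U. f x * (g x - a n x))
      = (\<Sum>z\<in>centres m n. \<Sum>x\<in>box (2^n) z. f x * (g x - avg (box (2^n) z) g))"
    unfolding a_def by (rule sum_centres_eq_sum_dyadic_blocks[OF nm, symmetric])
  also have "(\<Sum>x\<in>?U. f x * (a n x - a m x)) = (\<Sum>k\<in>{n..<m}. \<Sum>x\<in>?U. f x * (a k x - a (Suc k) x))"
    unfolding telescope sum_distrib_left by (rule sum.swap)
  also have "\<dots> \<le> (\<Sum>k\<in>{n..<m}. ?C * (2 powr (real k * (real CARD('d) + \<alpha>) / 2)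
             * sqrt (\<Sum>y\<in>centres m k. (avg (box (2^k) y) f)\<^sup>2)))"
  proof (rule sum_mono)
    fix k assume k: "k \<in> {n..<m}"
    then have "\<forall>y\<in>centres m (Suc k). well_connected (\<lambda>e. W e \<omega>) c \<delta> (box (2^Suc k) y)"
      using conn[rule_format, of "Suc k"] by simp
    with k show "(\<Sum>x\<in>?U. f x * (a k x - a (Suc k) x)) \<le> ?C * (2 powr (real k * (real CARD('d) + \<alpha>) / 2)
             * sqrt (\<Sum>y\<in>centres m k. (avg (box (2^k) y) f)\<^sup>2))"
      unfolding a_def mult.assoc
      by (intro level_difference_bound[where W=W and \<omega>=\<omega>, OF W c \<delta> \<alpha>, simplified mult.assoc]) auto
  qed
  finally show ?thesis by (simp add: sum_distrib_left)
qed

section \<open>Random boxes are well connected\<close>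

lemma doubleton_mem_edges: "x \<noteq> y \<Longrightarrow> {x, y} \<in> edges"
  by (auto simp: edges_def)

context prob_space
begin

lemma indep_vars_common_neighbour_indicators:
  fixes W :: "(int^'d) set \<Rightarrow> 'a \<Rightarrow> real"
  assumes ind: "indep_vars (\<lambda>_. borel) W edges" and xu: "x \<noteq> u" and S: "S \<inter> {x,u} = {}"
  shows "indep_vars (\<lambda>_. borel)
    (\<lambda>z \<omega>. if c \<le> W {x,z} \<omega> \<and> c \<le> W {z,u} \<omega> then 1 else (0::real)) S"
proof -
  define K where "K z = {{x,z},{z,u}}" for z
  define ind2 :: "((int^'d) set \<Rightarrow> real) \<Rightarrow> int^'d \<Rightarrow> real"
    where "ind2 h z = (if c \<le> h {x,z} \<and> c \<le> h {z,u} then 1 else 0)" for h z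
  have K: "K z \<subseteq> edges" if "z \<in> S" for z
    using that S by (auto simp: K_def intro: doubleton_mem_edges)
  have disj: "disjoint_family_on K S"
    unfolding disjoint_family_on_def K_def using S xu by (auto simp: doubleton_eq_iff)
  have "indep_vars (\<lambda>z. PiM (K z) (\<lambda>_. borel)) (\<lambda>z \<omega>. restrict (\<lambda>e. W e \<omega>) (K z)) S"
    by (rule indep_vars_restrict[OF ind K disj])
  moreover have "(\<lambda>h. ind2 h z) \<in> borel_measurable (PiM (K z) (\<lambda>_. borel))" for z
  proof -
    have [measurable]: "(\<lambda>h. h e) \<in> borel_measurable (PiM (K z) (\<lambda>_. (borel :: real measure)))"
      if "e \<in> K z" for e
      using that by (rule measurable_component_singleton)
    show ?thesis unfolding ind2_def by (simp add: K_def)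
  qed
  ultimately have "indep_vars (\<lambda>_. borel) (\<lambda>z \<omega>. ind2 (restrict (\<lambda>e. W e \<omega>) (K z)) z) S"
    by (rule indep_vars_compose2)
  then show ?thesis by (simp add: ind2_def K_def)
qed

lemma prob_indep_edges_ge:
  fixes W :: "(int^'d) set \<Rightarrow> 'a \<Rightarrow> real"
  assumes ind: "indep_vars (\<lambda>_. borel) W edges" and "e1 \<in> edges" "e2 \<in> edges" "e1 \<noteq> e2"
  shows "prob {\<omega>\<in>space M. c \<le> W e1 \<omega> \<and> c \<le> W e2 \<omega>}
       = prob {\<omega>\<in>space M. c \<le> W e1 \<omega>} * prob {\<omega>\<in>space M. c \<le> W e2 \<omega>}"
proof -
  define A where "A e = W e -` {c..} \<inter> space M" for e
  have "indep_sets (\<lambda>i. {W i -` A \<inter> space M | A. A \<in> sets borel}) edges"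
    using ind unfolding indep_vars_def2 by simp
  moreover have "A \<in> Pi {e1,e2} (\<lambda>i. {W i -` A \<inter> space M | A. A \<in> sets (borel::real measure)})"
    unfolding A_def by (auto intro!: exI[of _ "{c..}"])
  moreover have "{e1,e2} \<subseteq> edges" using assms by auto
  ultimately have "prob (\<Inter>j\<in>{e1,e2}. A j) = (\<Prod>j\<in>{e1,e2}. prob (A j))"
    unfolding indep_sets_def by blast
  moreover have "(\<Inter>j\<in>{e1,e2}. A j) = {\<omega>\<in>space M. c \<le> W e1 \<omega> \<and> c \<le> W e2 \<omega>}"
    by (auto simp: A_def)
  moreover have "A e = {\<omega>\<in>space M. c \<le> W e \<omega>}" for e by (auto simp: A_def)
  ultimately show ?thesis using assms(4) by simp
qed

lemma expectation_common_neighbour_indicator: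
  fixes W :: "(int^'d) set \<Rightarrow> 'a \<Rightarrow> real"
  assumes ind: "indep_vars (\<lambda>_. borel) W edges"
    and pe: "\<forall>e\<in>edges. prob {\<omega>\<in>space M. c \<le> W e \<omega>} = p"
    and "x \<noteq> u" and "z \<noteq> x" and "z \<noteq> u"
  shows "expectation (\<lambda>\<omega>. if c \<le> W {x,z} \<omega> \<and> c \<le> W {z,u} \<omega> then 1 else 0) = p\<^sup>2"
proof -
  have e: "{x,z} \<in> edges" "{z,u} \<in> edges" "{x,z} \<noteq> {z,u}"
    using assms(3-5) by (auto simp: doubleton_eq_iff intro: doubleton_mem_edges)
  have "expectation (\<lambda>\<omega>. if c \<le> W {x,z} \<omega> \<and> c \<le> W {z,u} \<omega> then 1 else 0)
      = expectation (indicator {\<omega>\<in>space M. c \<le> W {x,z} \<omega> \<and> c \<le> W {z,u} \<omega>})"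
    by (rule Bochner_Integration.integral_cong) (auto simp: indicator_def)
  also have "\<dots> = prob {\<omega>\<in>space M. c \<le> W {x,z} \<omega> \<and> c \<le> W {z,u} \<omega>}"
    by (simp add: integral_indicator Int_absorb2 subset_iff)
  also have "\<dots> = p\<^sup>2"
    using prob_indep_edges_ge[OF ind e] pe e by (simp add: power2_eq_square)
  finally show ?thesis .
qed

lemma prob_few_common_neighbours_le:
  fixes W :: "(int^'d) set \<Rightarrow> 'a \<Rightarrow> real"
  assumes ind: "indep_vars (\<lambda>_. borel) W edges"
    and pe: "\<forall>e\<in>edges. prob {\<omega>\<in>space M. c \<le> W e \<omega>} = p"
    and fin: "finite P" and x: "x \<in> P" and u: "u \<in> P" and xu: "x \<noteq> u" and P4: "4 \<le> card P"
  shows "prob {\<omega>\<in>space M. real (card {z\<in>P-{x,u}. c \<le> W {x,z} \<omega> \<and> c \<le> W {z,u} \<omega>})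
            < p\<^sup>2/4 * real (card P)} \<le> exp (-(p^4/4) * real (card P))"
proof -
  define S where "S = P - {x,u}"
  define Y where "Y z \<omega> = (if c \<le> W {x,z} \<omega> \<and> c \<le> W {z,u} \<omega> then 1 else (0::real))" for z \<omega>
  define n where "n = card S"
  have n: "real (card P) \<le> 2 * real n" "0 < real n"
    using x u xu fin P4 by (auto simp: n_def S_def card_Diff_subset)
  have EY: "expectation (Y z) = p\<^sup>2" if "z \<in> S" for z
    unfolding Y_def using that xu by (intro expectation_common_neighbour_indicator[OF ind pe]) (auto simp: S_def)
  interpret H: Hoeffding_ineq M S Y "\<lambda>_. 0" "\<lambda>_. 1" "real n * p\<^sup>2"
  proof unfold_locales
    show "finite S" using fin by (simp add: S_def)
    show "indep_vars (\<lambda>_. borel) Y S"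
      unfolding Y_def by (rule indep_vars_common_neighbour_indicators[OF ind xu]) (auto simp: S_def)
    show "AE x in M. Y i x \<in> {0..1}" if "i \<in> S" for i by (simp add: Y_def)
    show "real n * p\<^sup>2 \<equiv> (\<Sum>i\<in>S. expectation (Y i))" using EY by (simp add: n_def)
  qed
  have [measurable]: "i \<in> S \<Longrightarrow> Y i \<in> borel_measurable M" for i by (rule H.random_variable)
  have card_eq: "real (card {z\<in>S. c \<le> W {x,z} \<omega> \<and> c \<le> W {z,u} \<omega>}) = (\<Sum>z\<in>S. Y z \<omega>)" for \<omega>
    using fin by (simp add: Y_def S_def sum.inter_filter[symmetric])
  define t where "t = real n * p\<^sup>2 / 2"
  have "p\<^sup>2 * real (card P) \<le> p\<^sup>2 * (2 * real n)"
    using n by (intro mult_left_mono) auto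
  then have "p\<^sup>2/4 * real (card P) \<le> real n * p\<^sup>2 - t" by (simp add: t_def mult_ac)
  then have "{\<omega>\<in>space M. real (card {z\<in>S. c \<le> W {x,z} \<omega> \<and> c \<le> W {z,u} \<omega>}) < p\<^sup>2/4 * real (card P)}
      \<subseteq> {\<omega>\<in>space M. (\<Sum>z\<in>S. Y z \<omega>) \<le> real n * p\<^sup>2 - t}"
    unfolding card_eq by auto
  then have "prob {\<omega>\<in>space M. real (card {z\<in>S. c \<le> W {x,z} \<omega> \<and> c \<le> W {z,u} \<omega>}) < p\<^sup>2/4 * real (card P)}
      \<le> prob {\<omega>\<in>space M. (\<Sum>z\<in>S. Y z \<omega>) \<le> real n * p\<^sup>2 - t}"
    by (rule finite_measure_mono) measurable
  also have "\<dots> \<le> exp (-2 * t\<^sup>2 / (\<Sum>i\<in>S. (1 - 0)\<^sup>2))"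
    using n by (intro H.Hoeffding_ineq_le) (auto simp: n_def t_def)
  also have "\<dots> = exp (-(p^4/2) * real n)"
    using n by (simp add: n_def t_def power2_eq_square field_simps eval_nat_numeral)
  also have "\<dots> \<le> exp (-(p^4/4) * real (card P))"
    using mult_left_mono[OF n(1), of "p^4"] by (simp add: mult_ac)
  finally show ?thesis by (simp add: S_def)
qed

end

definition ill_connected ::
  "'a measure \<Rightarrow> ('b set \<Rightarrow> 'a \<Rightarrow> real) \<Rightarrow> real \<Rightarrow> real \<Rightarrow> 'b set \<Rightarrow> 'a set" where
  "ill_connected M W c \<delta> P = {\<omega>\<in>space M. \<not> well_connected (\<lambda>e. W e \<omega>) c \<delta> P}"

lemma ill_connected_eq_UN:
  "ill_connected M W c \<delta> P = (\<Union>x\<in>P. \<Union>u\<in>P-{x}. {\<omega>\<in>space M.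
     real (card {z\<in>P-{x,u}. c \<le> W {x,z} \<omega> \<and> c \<le> W {z,u} \<omega>}) < \<delta> * real (card P)})"
  by (auto simp: ill_connected_def well_connected_def not_le)

lemma sets_few_common_neighbours:
  fixes W :: "(int^'d) set \<Rightarrow> 'a \<Rightarrow> real"
  assumes meas: "\<forall>e\<in>edges. W e \<in> borel_measurable M" and "finite P"
  shows "{\<omega>\<in>space M. real (card {z\<in>P-{x,u}. c \<le> W {x,z} \<omega> \<and> c \<le> W {z,u} \<omega>}) < r} \<in> sets M"
proof -
  have "(\<lambda>\<omega>. if c \<le> W {x,z} \<omega> \<and> c \<le> W {z,u} \<omega> then 1 else (0::real)) \<in> borel_measurable M"
    if "z \<in> P - {x,u}" for z
  proof -
    have [measurable]: "W {x,z} \<in> borel_measurable M" "W {z,u} \<in> borel_measurable M"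
      using meas that by (auto intro: doubleton_mem_edges)
    show ?thesis by measurable
  qed
  then have [measurable]: "(\<lambda>\<omega>. \<Sum>z\<in>P-{x,u}. if c \<le> W {x,z} \<omega> \<and> c \<le> W {z,u} \<omega> then 1 else (0::real))
      \<in> borel_measurable M"
    by (rule borel_measurable_sum)
  have "{\<omega>\<in>space M. real (card {z\<in>P-{x,u}. c \<le> W {x,z} \<omega> \<and> c \<le> W {z,u} \<omega>}) < r}
      = {\<omega>\<in>space M. (\<Sum>z\<in>P-{x,u}. if c \<le> W {x,z} \<omega> \<and> c \<le> W {z,u} \<omega> then 1 else 0) < r}"
    using \<open>finite P\<close> by (simp add: sum.inter_filter[symmetric])
  also have "\<dots> \<in> sets M" by measurable
  finally show ?thesis .
qed

lemma sets_ill_connected: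
  fixes W :: "(int^'d) set \<Rightarrow> 'a \<Rightarrow> real"
  assumes "\<forall>e\<in>edges. W e \<in> borel_measurable M" and "finite P"
  shows "ill_connected M W c \<delta> P \<in> sets M"
  unfolding ill_connected_eq_UN using assms
  by (intro sets.finite_UN finite_Diff sets_few_common_neighbours) auto

lemma (in prob_space) prob_ill_connected_le:
  fixes W :: "(int^'d) set \<Rightarrow> 'a \<Rightarrow> real"
  assumes meas: "\<forall>e\<in>edges. W e \<in> borel_measurable M"
    and ind: "indep_vars (\<lambda>_. borel) W edges"
    and pe: "\<forall>e\<in>edges. prob {\<omega>\<in>space M. c \<le> W e \<omega>} = p"
    and fin: "finite P" and P4: "4 \<le> card P"
  shows "prob (ill_connected M W c (p\<^sup>2/4) P) \<le> (real (card P))\<^sup>2 * exp (-(p^4/4) * real (card P))"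
proof -
  let ?A = "\<lambda>x u. {\<omega>\<in>space M.
     real (card {z\<in>P-{x,u}. c \<le> W {x,z} \<omega> \<and> c \<le> W {z,u} \<omega>}) < p\<^sup>2/4 * real (card P)}"
  let ?q = "exp (-(p^4/4) * real (card P))"
  have A: "?A x u \<in> events" for x u by (rule sets_few_common_neighbours[OF meas fin])
  have "prob (ill_connected M W c (p\<^sup>2/4) P) \<le> (\<Sum>x\<in>P. prob (\<Union>u\<in>P-{x}. ?A x u))"
    unfolding ill_connected_eq_UN using fin A by (intro measure_UNION_le) auto
  also have "\<dots> \<le> (\<Sum>x\<in>P. \<Sum>u\<in>P-{x}. prob (?A x u))"
    using fin A by (intro sum_mono measure_UNION_le) auto
  also have "\<dots> \<le> (\<Sum>x\<in>P. \<Sum>u\<in>P-{x}. ?q)"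
  proof (intro sum_mono)
    fix x u assume "x \<in> P" "u \<in> P - {x}"
    then show "prob (?A x u) \<le> ?q" by (intro prob_few_common_neighbours_le[OF ind pe fin _ _ _ P4]) auto
  qed
  also have "\<dots> \<le> (\<Sum>x\<in>P. \<Sum>u\<in>P. ?q)"
    using fin by (intro sum_mono sum_mono2) auto
  also have "\<dots> = (real (card P))\<^sup>2 * ?q" by (simp add: power2_eq_square)
  finally show ?thesis .
qed

definition coarse_levels :: "real \<Rightarrow> nat \<Rightarrow> nat set" where
  "coarse_levels \<theta> m = {j. 0 < j \<and> j \<le> m \<and> \<theta> * log 2 (real m * ln 2) < real j}"

definition bad_event ::
  "'a measure \<Rightarrow> ((int^'d) set \<Rightarrow> 'a \<Rightarrow> real) \<Rightarrow> real \<Rightarrow> real \<Rightarrow> real \<Rightarrow> nat \<Rightarrow> 'a set" where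
  "bad_event M W c \<delta> \<theta> m =
     (\<Union>j\<in>coarse_levels \<theta> m. \<Union>y\<in>centres m j. ill_connected M W c \<delta> (box (2^j) y))"

lemma finite_coarse_levels: "finite (coarse_levels \<theta> m)"
  by (rule finite_subset[of _ "{..m}"]) (auto simp: coarse_levels_def)

lemma card_coarse_levels_le: "card (coarse_levels \<theta> m) \<le> m + 1"
  using card_mono[of "{..m}" "coarse_levels \<theta> m"] by (auto simp: coarse_levels_def)

lemma sets_bad_event:
  assumes "\<forall>e\<in>edges. W e \<in> borel_measurable M"
  shows "bad_event M W c \<delta> \<theta> m \<in> sets M"
  unfolding bad_event_def
  by (intro sets.finite_UN finite_coarse_levels finite_centres sets_ill_connected[OF assms] finite_box)

lemma powr_log_le_card_box:
  assumes "1 \<le> m" and "0 \<le> \<theta>" and "j \<in> coarse_levels \<theta> m"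
  shows "(real m * ln 2) powr (real d * \<theta>) \<le> 2 ^ ((j+1) * d)"
proof -
  define L where "L = log 2 (real m * ln 2)"
  have "(real m * ln 2) powr (real d * \<theta>) = (2 powr L) powr (real d * \<theta>)"
    using assms(1) by (simp add: L_def)
  also have "\<dots> = 2 powr (real d * (\<theta> * L))" by (simp add: powr_powr mult_ac)
  also have "\<dots> \<le> 2 powr (real ((j+1) * d))"
  proof (rule powr_mono)
    have "real d * (\<theta> * L) \<le> real d * real j"
      using assms(3) by (intro mult_left_mono) (auto simp: coarse_levels_def L_def)
    then show "real d * (\<theta> * L) \<le> real ((j+1) * d)" by (simp add: algebra_simps)
  qed simp
  also have "\<dots> = 2 ^ ((j+1) * d)" by (rule powr_realpow) simp
  finally show ?thesis .
qed

lemma square_mult_exp_le: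
  fixes a N :: real
  assumes a: "0 < a" and N: "0 \<le> N"
  shows "N\<^sup>2 * exp (-a*N) \<le> 16/a\<^sup>2 * exp (-(a/2)*N)"
proof -
  have "a*N/4 \<le> exp (a*N/4)" using exp_ge_add_one_self[of "a*N/4"] by linarith
  then have "(a*N/4)\<^sup>2 \<le> (exp (a*N/4))\<^sup>2" using a N by (intro power_mono) auto
  then have "N\<^sup>2 \<le> 16/a\<^sup>2 * exp (a*N/2)"
    using a by (simp add: field_simps power2_eq_square flip: exp_add)
  then have "N\<^sup>2 * exp (-a*N) \<le> 16/a\<^sup>2 * exp (a*N/2) * exp (-a*N)"
    by (intro mult_right_mono) auto
  also have "\<dots> = 16/a\<^sup>2 * exp (-(a/2)*N)" by (simp add: mult.assoc flip: exp_add)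
  finally show ?thesis .
qed

lemma (in prob_space) prob_ill_connected_coarse_box_le:
  fixes W :: "(int^'d) set \<Rightarrow> 'a \<Rightarrow> real"
  assumes meas: "\<forall>e\<in>edges. W e \<in> borel_measurable M"
    and ind: "indep_vars (\<lambda>_. borel) W edges"
    and pe: "\<forall>e\<in>edges. prob {\<omega>\<in>space M. c \<le> W e \<omega>} = p"
    and p: "0 < p" and \<theta>: "0 \<le> \<theta>" and m: "1 \<le> m" and j: "j \<in> coarse_levels \<theta> m"
  shows "prob (ill_connected M W c (p\<^sup>2/4) (box (2^j) (y::int^'d)))
    \<le> 16/(p^4/4)\<^sup>2 * exp (-((p^4/4)/2) * (real m * ln 2) powr (real CARD('d) * \<theta>))"
proof -
  define a where "a = p^4/4"
  define N :: real where "N = 2^((j+1) * CARD('d))"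
  have a: "0 < a" using p by (simp add: a_def)
  have "2 * 1 \<le> (j+1) * CARD('d)"
    using j by (intro mult_le_mono) (auto simp: coarse_levels_def Suc_le_eq)
  then have "(2::nat)^2 \<le> 2^((j+1) * CARD('d))" by (intro power_increasing) auto
  then have "4 \<le> card (box (2^j) y)" by (simp add: card_dyadic_box)
  then have "prob (ill_connected M W c (p\<^sup>2/4) (box (2^j) y))
      \<le> (real (card (box (2^j) y)))\<^sup>2 * exp (-(p^4/4) * real (card (box (2^j) y)))"
    by (rule prob_ill_connected_le[OF meas ind pe finite_box])
  also have "\<dots> = N\<^sup>2 * exp (-a * N)" by (simp add: a_def N_def card_dyadic_box)
  also have "\<dots> \<le> 16/a\<^sup>2 * exp (-(a/2) * N)"
    by (rule square_mult_exp_le[OF a]) (simp add: N_def)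
  also have "\<dots> \<le> 16/a\<^sup>2 * exp (-(a/2) * (real m * ln 2) powr (real CARD('d) * \<theta>))"
  proof -
    have "(real m * ln 2) powr (real CARD('d) * \<theta>) \<le> N"
      using powr_log_le_card_box[OF m \<theta> j] by (simp add: N_def)
    then have "-(a/2) * N \<le> -(a/2) * (real m * ln 2) powr (real CARD('d) * \<theta>)"
      using a by (intro mult_left_mono_neg) auto
    then show ?thesis by (intro mult_left_mono) auto
  qed
  finally show ?thesis unfolding a_def .
qed

lemma (in prob_space) prob_bad_event_le:
  fixes W :: "(int^'d) set \<Rightarrow> 'a \<Rightarrow> real"
  assumes meas: "\<forall>e\<in>edges. W e \<in> borel_measurable M"
    and ind: "indep_vars (\<lambda>_. borel) W edges"
    and pe: "\<forall>e\<in>edges. prob {\<omega>\<in>space M. c \<le> W e \<omega>} = p"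
    and p: "0 < p" and \<theta>: "0 \<le> \<theta>" and m: "1 \<le> m"
  shows "prob (bad_event M W c (p\<^sup>2/4) \<theta> m) \<le> real (m+1) * (2^((m+1) * CARD('d))
    * (16/(p^4/4)\<^sup>2 * exp (-((p^4/4)/2) * (real m * ln 2) powr (real CARD('d) * \<theta>))))"
    (is "_ \<le> _ * (_ * ?Z)")
proof -
  let ?B = "\<lambda>j y. ill_connected M W c (p\<^sup>2/4) (box (2^j) (y::int^'d))"
  have B: "?B j y \<in> events" for j y by (intro sets_ill_connected[OF meas] finite_box)
  have "prob (bad_event M W c (p\<^sup>2/4) \<theta> m) \<le> (\<Sum>j\<in>coarse_levels \<theta> m. prob (\<Union>y\<in>centres m j. ?B j y))"
    unfolding bad_event_def using B
    by (intro measure_UNION_le finite_coarse_levels sets.finite_UN finite_centres) auto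
  also have "\<dots> \<le> (\<Sum>j\<in>coarse_levels \<theta> m. \<Sum>y\<in>centres m j. prob (?B j y))"
    using B by (intro sum_mono measure_UNION_le finite_centres) auto
  also have "\<dots> \<le> (\<Sum>j\<in>coarse_levels \<theta> m. \<Sum>y\<in>(centres m j :: (int^'d) set). ?Z)"
    by (intro sum_mono prob_ill_connected_coarse_box_le[OF meas ind pe p \<theta> m])
  also have "\<dots> \<le> (\<Sum>j\<in>coarse_levels \<theta> m. 2^((m+1) * CARD('d)) * ?Z)"
  proof (intro sum_mono)
    fix j
    have "card (centres m j :: (int^'d) set) \<le> card (box (2^m) (0::int^'d))"
      by (rule card_mono[OF finite_box centres_subset_box])
    then have "real (card (centres m j :: (int^'d) set)) \<le> 2^((m+1) * CARD('d))"
      by (simp add: card_dyadic_box)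
    moreover have "0 \<le> ?Z" by simp
    ultimately show "(\<Sum>y\<in>(centres m j :: (int^'d) set). ?Z) \<le> 2^((m+1) * CARD('d)) * ?Z"
      unfolding sum_constant by (rule mult_right_mono)
  qed
  also have "\<dots> \<le> real (m+1) * (2^((m+1) * CARD('d)) * ?Z)"
  proof -
    have "real (card (coarse_levels \<theta> m)) \<le> real (m+1)"
      using card_coarse_levels_le by (simp only: of_nat_le_iff)
    moreover have "0 \<le> 2^((m+1) * CARD('d)) * ?Z" by simp
    ultimately show ?thesis unfolding sum_constant by (rule mult_right_mono)
  qed
  finally show ?thesis .
qed

section \<open>Borel--Cantelli and the main theorem\<close>

lemma bad_event_bound_le_geometric:
  fixes a K \<beta> :: real and d m :: nat
  assumes a: "0 < a" and K: "0 \<le> K" and m: "1 \<le> m"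
    and large: "2 * (real d + 2) / a \<le> (real m * ln 2) powr (\<beta> - 1)"
  shows "real (m+1) * (2^((m+1)*d) * (K * exp (-(a/2) * (real m * ln 2) powr \<beta>)))
    \<le> K * 2^d * (1/2)^m"
proof -
  define y where "y = real m * ln 2"
  have y: "0 < y" using m by (simp add: y_def)
  have "(real d + 2) * y = (a/2) * (2 * (real d + 2) / a) * y" using a by simp
  also have "\<dots> \<le> (a/2) * y powr (\<beta> - 1) * y"
    using large a y by (intro mult_right_mono mult_left_mono) (auto simp: y_def)
  also have "\<dots> = (a/2) * y powr \<beta>"
    using y by (simp add: powr_diff)
  finally have "exp (-(a/2) * y powr \<beta>) \<le> exp (-((real d + 2) * y))" by simp
  also have "\<dots> = 2 powr (- real ((d+2)*m))"
    by (simp add: powr_def y_def algebra_simps)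
  also have "\<dots> = 1 / 2 powr (real ((d+2)*m))" by (rule powr_minus_divide)
  also have "\<dots> = 1 / 2^((d+2)*m)" by (subst powr_realpow) simp_all
  finally have e: "exp (-(a/2) * y powr \<beta>) \<le> 1 / 2^((d+2)*m)" .
  have "m + 1 \<le> 2^m" using less_exp[of m] by (simp add: Suc_le_eq)
  then have "real (m+1) \<le> 2^m" by (metis of_nat_le_iff of_nat_numeral of_nat_power)
  then have "real (m+1) * (2^((m+1)*d) * (K * exp (-(a/2) * y powr \<beta>)))
      \<le> 2^m * (2^((m+1)*d) * (K * (1 / 2^((d+2)*m))))"
    using e K by (intro mult_mono) (auto intro!: mult_left_mono)
  also have "\<dots> = K * 2^d * (1/2)^m"
  proof -
    have "(2::real)^((d+2)*m) = 2^m * 2^(m*d) * 2^m" "(2::real)^((m+1)*d) = 2^(m*d) * 2^d"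
      by (simp_all add: algebra_simps flip: power_add)
    then show ?thesis by (simp add: field_simps)
  qed
  finally show ?thesis by (simp add: y_def)
qed

lemma summable_bad_event_bound:
  fixes a K \<beta> :: real and d :: nat
  assumes a: "0 < a" and \<beta>: "1 < \<beta>" and K: "0 \<le> K"
  shows "summable (\<lambda>m. real (m+1) * (2^((m+1)*d) * (K * exp (-(a/2) * (real m * ln 2) powr \<beta>))))"
proof (rule summable_comparison_test_ev)
  show "summable (\<lambda>m. K * 2^d * (1/2::real)^m)"
    by (intro summable_mult summable_geometric) simp
  have "filterlim (\<lambda>m::nat. real m * ln 2) at_top sequentially"
    by (rule filterlim_at_top_mult_tendsto_pos[OF tendsto_const _ filterlim_real_sequentially]) simp
  then have "filterlim (\<lambda>m::nat. (real m * ln 2) powr (\<beta> - 1)) at_top sequentially"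
    by (rule filterlim_compose[OF real_powr_at_top, rotated]) (use \<beta> in simp)
  then have "eventually (\<lambda>m. 2 * (real d + 2) / a \<le> (real m * ln 2) powr (\<beta> - 1)) sequentially"
    by (simp add: filterlim_at_top)
  moreover have "eventually (\<lambda>m::nat. 1 \<le> m) sequentially" by (rule eventually_ge_at_top)
  ultimately show "eventually (\<lambda>m. norm (real (m+1) * (2^((m+1)*d)
      * (K * exp (-(a/2) * (real m * ln 2) powr \<beta>)))) \<le> K * 2^d * (1/2)^m) sequentially"
  proof eventually_elim
    case (elim m)
    then show ?case using bad_event_bound_le_geometric[OF a K elim(2,1)] K by simp
  qed
qed

lemma well_connected_outside_bad_event:
  assumes "\<omega> \<in> space M" and "\<omega> \<notin> bad_event M W c \<delta> \<theta> m"
    and "\<theta> * log 2 (real m * ln 2) \<le> real n"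
  shows "\<forall>j. n < j \<and> j \<le> m \<longrightarrow>
    (\<forall>y\<in>centres m j. well_connected (\<lambda>e. W e \<omega>) c \<delta> (box (2^j) (y::int^'d)))"
proof (intro allI impI ballI)
  fix j and y :: "int^'d"
  assume j: "n < j \<and> j \<le> m" and y: "y \<in> centres m j"
  then have "real n < real j" by simp
  then have "j \<in> coarse_levels \<theta> m" using j assms(3) by (auto simp: coarse_levels_def)
  then show "well_connected (\<lambda>e. W e \<omega>) c \<delta> (box (2^j) y)"
    using assms(1,2) y by (auto simp: bad_event_def ill_connected_def)
qed

context prob_space
begin

lemma borel_cantelli_last_index:
  assumes B: "\<And>m. B m \<in> events" and summable: "summable (\<lambda>m. prob (B m))"
  obtains m0 :: "'a \<Rightarrow> ereal"
  where "m0 \<in> borel_measurable M" and "\<And>\<omega>. 1 \<le> m0 \<omega>" and "AE \<omega> in M. m0 \<omega> \<noteq> \<infinity>"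
    and "\<And>\<omega> m. \<omega> \<in> B m \<Longrightarrow> ereal (real m) < m0 \<omega>"
proof
  define m0 where "m0 \<omega> = (SUP m. if \<omega> \<in> B m then ereal (real m + 1) else 1)" for \<omega>
  have upper: "(if \<omega> \<in> B m then ereal (real m + 1) else 1) \<le> m0 \<omega>" for \<omega> m
    unfolding m0_def by (rule SUP_upper) simp
  show "m0 \<in> borel_measurable M"
    unfolding m0_def using B by (intro borel_measurable_SUP) auto
  show "1 \<le> m0 \<omega>" for \<omega>
    using upper[of \<omega> 0] by (simp add: one_ereal_def split: if_splits)
  show "ereal (real m) < m0 \<omega>" if "\<omega> \<in> B m" for \<omega> m
    using upper[of \<omega> m] that by (auto intro: less_le_trans[of _ "ereal (real m + 1)"])
  have "AE \<omega> in M. eventually (\<lambda>m. \<omega> \<in> space M - B m) sequentially"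
    using B summable by (intro borel_cantelli_AE1) (simp_all add: emeasure_eq_measure)
  then show "AE \<omega> in M. m0 \<omega> \<noteq> \<infinity>"
  proof eventually_elim
    case (elim \<omega>)
    then obtain N where N: "\<And>m. N \<le> m \<Longrightarrow> \<omega> \<notin> B m" by (auto simp: eventually_sequentially)
    have "m0 \<omega> \<le> ereal (real N + 1)"
      unfolding m0_def
    proof (rule SUP_least)
      fix m
      show "(if \<omega> \<in> B m then ereal (real m + 1) else 1) \<le> ereal (real N + 1)"
        using N[of m] by (cases "N \<le> m") (auto simp: one_ereal_def)
    qed
    then show ?case by auto
  qed
qed

lemma prob_ge_half_pos:
  fixes X :: "'a \<Rightarrow> real"
  assumes X: "X \<in> borel_measurable M" and b: "\<forall>\<omega>\<in>space M. 0 \<le> X \<omega> \<and> X \<omega> \<le> b"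
    and E: "expectation X = 1"
  shows "0 < prob {\<omega>\<in>space M. 1/2 \<le> X \<omega>}"
proof -
  define A where "A = {\<omega>\<in>space M. 1/2 \<le> X \<omega>}"
  have A: "A \<in> events" unfolding A_def using X by measurable
  have iX: "integrable M X"
    using b X by (intro integrable_const_bound[where B=b]) auto
  have iA: "integrable M (\<lambda>\<omega>. b * indicator A \<omega>)"
    using A by (intro integrable_mult_right integrable_real_indicator) (simp_all add: emeasure_eq_measure)
  have "1 = expectation X" using E by simp
  also have "\<dots> \<le> expectation (\<lambda>\<omega>. 1/2 + b * indicator A \<omega>)"
    using b by (intro integral_mono iX Bochner_Integration.integrable_add iA) (auto simp: A_def indicator_def)
  also have "\<dots> = 1/2 + b * prob A"
    using A iA by (simp add: prob_space)
  finally have "0 < b * prob A" by simp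
  moreover have "0 \<le> b" using b not_empty by (auto intro: order_trans)
  ultimately show ?thesis unfolding A_def by (auto simp: zero_less_mult_iff)
qed

lemma prob_ge_eq_if_distr_eq:
  fixes X Y :: "'a \<Rightarrow> real"
  assumes "X \<in> borel_measurable M" and "Y \<in> borel_measurable M"
    and "distr M borel X = distr M borel Y"
  shows "prob {\<omega>\<in>space M. c \<le> X \<omega>} = prob {\<omega>\<in>space M. c \<le> Y \<omega>}"
proof -
  have "prob {\<omega>\<in>space M. c \<le> Z \<omega>} = measure (distr M borel Z) {c..}"
    if "Z \<in> borel_measurable M" for Z :: "'a \<Rightarrow> real"
    using that by (subst measure_distr) (auto simp: vimage_def Int_def conj_commute)
  then show ?thesis using assms by metis
qed

lemma multiscale_bound_AE:
  fixes W :: "(int^'d) set \<Rightarrow> 'a \<Rightarrow> real"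
  assumes meas: "\<forall>e\<in>edges. W e \<in> borel_measurable M"
    and ind: "indep_vars (\<lambda>_. borel) W edges"
    and W: "\<forall>e\<in>edges. \<forall>\<omega>\<in>space M. 0 \<le> W e \<omega>"
    and pe: "\<forall>e\<in>edges. prob {\<omega>\<in>space M. c \<le> W e \<omega>} = p"
    and c: "0 < c" and p: "0 < p" and \<alpha>: "0 \<le> \<alpha>" and \<theta>: "1 / real CARD('d) < \<theta>"
  shows "\<exists>m0 :: 'a \<Rightarrow> ereal. m0 \<in> borel_measurable M \<and>
       (\<forall>\<omega>\<in>space M. 1 \<le> m0 \<omega>) \<and>
       (AE \<omega> in M. m0 \<omega> \<noteq> \<infinity>) \<and>
       (AE \<omega> in M. \<forall>(m::nat) (n::nat) (f::int^'d \<Rightarrow> real) (g::int^'d \<Rightarrow> real).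
          ereal (real m) > m0 \<omega> \<and> \<theta> * log 2 (real m * ln 2) \<le> real n \<and> n \<le> m \<longrightarrow>
          (\<Sum>x\<in>box (2^m) 0. f x * (g x - avg (box (2^m) 0) g))
          \<le> (\<Sum>z\<in>centres m n. \<Sum>x\<in>box (2^n) z. f x * (g x - avg (box (2^n) z) g))
             + level_constant c (p\<^sup>2/4) CARD('d) \<alpha> * sqrt (energy W \<omega> \<alpha> (box (2^m) 0) g)
               * (\<Sum>k\<in>{n..<m}. 2 powr (real k * (real CARD('d) + \<alpha>) / 2)
                   * sqrt (\<Sum>y\<in>centres m k. (avg (box (2^k) y) f)\<^sup>2)))"
proof -
  have \<theta>0: "0 \<le> \<theta>" using le_less_trans[OF _ \<theta>, of 0] by simp
  have summable: "summable (\<lambda>m. prob (bad_event M W c (p\<^sup>2/4) \<theta> m))"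
  proof (rule summable_comparison_test'[where N=1])
    show "summable (\<lambda>m. real (m+1) * (2^((m+1) * CARD('d)) * (16/(p^4/4)\<^sup>2
        * exp (-((p^4/4)/2) * (real m * ln 2) powr (real CARD('d) * \<theta>)))))"
      using p \<theta> by (intro summable_bad_event_bound) (auto simp: field_simps)
  qed (use prob_bad_event_le[OF meas ind pe p \<theta>0] in simp)
  obtain m0 where m0: "m0 \<in> borel_measurable M" "\<And>\<omega>. 1 \<le> m0 \<omega>" "AE \<omega> in M. m0 \<omega> \<noteq> \<infinity>"
    "\<And>\<omega> m. \<omega> \<in> bad_event M W c (p\<^sup>2/4) \<theta> m \<Longrightarrow> ereal (real m) < m0 \<omega>"
    using borel_cantelli_last_index[OF sets_bad_event[OF meas] summable] by metis
  have conn: "\<forall>j. n < j \<and> j \<le> m \<longrightarrow>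
      (\<forall>y\<in>centres m j. well_connected (\<lambda>e. W e \<omega>) c (p\<^sup>2/4) (box (2^j) (y::int^'d)))"
    if "\<omega> \<in> space M" and "m0 \<omega> < ereal (real m)" and "\<theta> * log 2 (real m * ln 2) \<le> real n"
    for \<omega> m n
    using that m0(4)[of \<omega> m] by (intro well_connected_outside_bad_event) auto
  have Wbox: "\<forall>x\<in>box (2^m) 0. \<forall>z\<in>box (2^m) (0::int^'d). x \<noteq> z \<longrightarrow> 0 \<le> W {x,z} \<omega>"
    if "\<omega> \<in> space M" for \<omega> m
    using W that by (auto intro: doubleton_mem_edges)
  show ?thesis
    by (intro exI[of _ m0] conjI m0(1,3) ballI m0(2) AE_I2 allI impI multiscale_bound[OF Wbox _ _ \<alpha> _ conn])
      (use c p in auto)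
qed

end

theorem proposition2p3:
  fixes M :: "'w measure"
    and W :: "(int^'d) set \<Rightarrow> 'w \<Rightarrow> real"
    and Mb :: real and \<alpha> :: real
  assumes "prob_space M"
    and "\<forall>e\<in>edges. W e \<in> borel_measurable M"
    and "prob_space.indep_vars M (\<lambda>_. borel) W edges"
    and "\<forall>e\<in>edges. \<forall>e'\<in>edges. distr M borel (W e) = distr M borel (W e')"
    and "\<forall>e\<in>edges. \<forall>\<omega>\<in>space M. 0 \<le> W e \<omega> \<and> W e \<omega> \<le> Mb"
    and "\<forall>e\<in>edges. integral\<^sup>L M (W e) = 1"
    and "Mb > 0"
    and "0 < \<alpha>" and "\<alpha> < 2"
  shows "\<exists>C2>0. \<forall>\<theta>::real. \<theta> > 1 / real CARD('d) \<longrightarrow>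
    (\<exists>m0 :: 'w \<Rightarrow> ereal. m0 \<in> borel_measurable M \<and>
       (\<forall>\<omega>\<in>space M. 1 \<le> m0 \<omega>) \<and>
       (AE \<omega> in M. m0 \<omega> \<noteq> \<infinity>) \<and>
       (AE \<omega> in M. \<forall>(m::nat) (n::nat) (f::int^'d \<Rightarrow> real) (g::int^'d \<Rightarrow> real).
          ereal (real m) > m0 \<omega> \<and> \<theta> * log 2 (real m * ln 2) \<le> real n \<and> n \<le> m \<longrightarrow>
          (\<Sum>x\<in>box (2^m) 0. f x * (g x - avg (box (2^m) 0) g))
          \<le> (\<Sum>z\<in>centres m n. \<Sum>x\<in>box (2^n) z. f x * (g x - avg (box (2^n) z) g))
             + C2 * sqrt (energy W \<omega> \<alpha> (box (2^m) 0) g)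
               * (\<Sum>k\<in>{n..<m}. 2 powr (real k * (real CARD('d) + \<alpha>) / 2)
                   * sqrt (\<Sum>y\<in>centres m k. (avg (box (2^k) y) f)\<^sup>2))))"
proof -
  interpret prob_space M by fact
  define e0 :: "(int^'d) set" where "e0 = {0, \<chi> i. 1}"
  have e0: "e0 \<in> edges" unfolding e0_def by (intro doubleton_mem_edges) (simp add: vec_eq_iff)
  define p where "p = prob {\<omega>\<in>space M. 1/2 \<le> W e0 \<omega>}"
  have pe: "\<forall>e\<in>edges. prob {\<omega>\<in>space M. 1/2 \<le> W e \<omega>} = p"
  proof
    fix e :: "(int^'d) set" assume e: "e \<in> edges"
    show "prob {\<omega>\<in>space M. 1/2 \<le> W e \<omega>} = p"
      unfolding p_def using assms(2) e e0 assms(4)[rule_format, OF e e0]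
      by (intro prob_ge_eq_if_distr_eq) simp_all
  qed
  have p: "0 < p"
    unfolding p_def using assms(2,5,6) e0 by (intro prob_ge_half_pos[where b=Mb]) auto
  have W: "\<forall>e\<in>edges. \<forall>\<omega>\<in>space M. 0 \<le> W e \<omega>" using assms(5) by blast
  show ?thesis
  proof (intro exI[of _ "level_constant (1/2) (p\<^sup>2/4) CARD('d) \<alpha>"] conjI allI impI)
    show "0 < level_constant (1/2) (p\<^sup>2/4) CARD('d) \<alpha>" using p by (simp add: level_constant_def)
  qed (rule multiscale_bound_AE[OF assms(2,3) W pe _ p], use assms(8) in simp_all)
qed

end
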